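(* Let $D$ be an integral domain with quotient field $K$, $\mathcal S$ a multiplicative subset of $D[X]$ ($0\notin\mathcal S$), $\circlearrowleft_{\mathcal S}$ the semistar operation $E\mapsto ED[X]_{\mathcal S}\cap K$ on $D$, $R:=D^{\circlearrowleft_{\mathcal S}}$, and $\iota:D\hookrightarrow R$ the inclusion. Then $R$ is $t$-linked to $(D,\circlearrowleft_{\mathcal S})$, and $\mathcal S\subseteq\mathcal N^{v_R}$ (equivalently, $(\circlearrowleft_{\mathcal S})_\iota$ is a (semi)star operation on $R$). Moreover, $(\circlearrowleft_{\mathcal S})_\iota=w_R$ if and only if the extended saturation $\mathcal S^{\sharp_R}$ of $\mathcal S$ in $R[X]$ equals $\mathcal N^{v_R}$.
   Context: $\overline{\boldsymbol F}(A)$ is the set of nonzero $A$-submodules of $K$ for a domain $A$ with quotient field $K$. A semistar operation on $A$ is a map $\star:\overline{\boldsymbol F}(A)\to\overline{\boldsymbol F}(A)$ with $(xE)^\star=xE^\star$ for $0\ne x\in K$, $E\subseteq F\Rightarrow E^\star\subseteq F^\star$, $E\subseteq E^\star$, $(E^\star)^\star=E^\star$; it is a (semi)star operation if $A^\star=A$. For an overring $R$ of $D$ and a semistar operation $\star$ on $D$, $\star_\iota$ is the semistar operation on $R$ given by $E^{\star_\iota}=E^\star$ for $E\in\overline{\boldsymbol F}(R)\subseteq\overline{\boldsymbol F}(D)$. $v_R$: $E\mapsto(R:(R:E))$; $t_R$ is its finite-type version $E^{t_R}=\bigcup\{F^{v_R}\mid F\subseteq E$ nonzero finitely generated$\}$;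 $w_R$ is the operation $E\mapsto\bigcap\{ER_P\mid P$ a maximal $t_R$-ideal of $R\}$. For $g\in R[X]$, $\mathrm{c}_R(g)$ is the ideal generated by its coefficients, and $\mathcal N^{v_R}=\{g\in R[X]\mid g\neq0,\ \mathrm{c}_R(g)^{v_R}=R\}$. An overring $R$ is $t$-linked to $(D,\star)$ if for each nonzero finitely generated ideal $I$ of $D$, $I^\star=D^\star$ implies $(IR)^{t_R}=R$. For a multiplicative set $\mathcal S\subseteq R[X]$, its extended saturation in $R[X]$ is $R[X]\setminus\bigcup\{P[X]\mid P\in\mathrm{Spec}(R),\ P[X]\cap\mathcal S=\emptyset\}$. *)

theory Defs
  imports "HOL-Computational_Algebra.Polynomial"
begin

text \<open>The quotient field K is the ambient type 'k; the domain D and its overrings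
are subsets of 'k.  Polynomials over a subset A are the K-polynomials whose
coefficients all lie in A.\<close>

definition subring :: "'k::field set \<Rightarrow> bool" where
  "subring A \<longleftrightarrow> 0 \<in> A \<and> 1 \<in> A \<and> (\<forall>x\<in>A. \<forall>y\<in>A. x + y \<in> A \<and> x * y \<in> A \<and> - x \<in> A)"

definition domain_with_qf :: "'k::field set \<Rightarrow> bool" where
  "domain_with_qf D \<longleftrightarrow> subring D \<and> (\<forall>x. \<exists>a\<in>D. \<exists>b\<in>D. b \<noteq> 0 \<and> x = a / b)"

definition polys_over :: "'k::field set \<Rightarrow> 'k poly set" where
  "polys_over A = {p. \<forall>i. coeff p i \<in> A}"

definition mult_subset :: "'k::field set \<Rightarrow> 'k poly set \<Rightarrow> bool" where
  "mult_subset D S \<longleftrightarrow> S \<subseteq> polys_over D \<and> 1 \<in> S \<and> 0 \<notin> S \<and>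
     (\<forall>f\<in>S. \<forall>g\<in>S. f * g \<in> S)"

definition submod :: "'k::field set \<Rightarrow> 'k set \<Rightarrow> bool" where
  "submod A E \<longleftrightarrow> 0 \<in> E \<and> (\<forall>x\<in>E. \<forall>y\<in>E. x + y \<in> E) \<and> (\<forall>a\<in>A. \<forall>x\<in>E. a * x \<in> E)"

definition Fbar :: "'k::field set \<Rightarrow> 'k set set" where
  "Fbar A = {E. submod A E \<and> E \<noteq> {0}}"

definition gen :: "'k::field set \<Rightarrow> 'k set \<Rightarrow> 'k set" where
  "gen A G = {x. \<exists>F c. finite F \<and> F \<subseteq> G \<and> (\<forall>g\<in>F. c g \<in> A) \<and> x = (\<Sum>g\<in>F. c g * g)}"

definition fin_gen :: "'k::field set \<Rightarrow> 'k set \<Rightarrow> bool" where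
  "fin_gen A F \<longleftrightarrow> (\<exists>G. finite G \<and> F = gen A G)"

definition is_ideal :: "'k::field set \<Rightarrow> 'k set \<Rightarrow> bool" where
  "is_ideal A I \<longleftrightarrow> submod A I \<and> I \<subseteq> A"

definition prime_ideal :: "'k::field set \<Rightarrow> 'k set \<Rightarrow> bool" where
  "prime_ideal A P \<longleftrightarrow> is_ideal A P \<and> P \<noteq> A \<and> (\<forall>a\<in>A. \<forall>b\<in>A. a * b \<in> P \<longrightarrow> a \<in> P \<or> b \<in> P)"

text \<open>The semistar operation E |-> E D[X]_S \<inter> K.  Here E D[X] is the
D[X]-submodule of K[X] generated by E, and x \<in> K lies in E D[X]_S iff
x * s \<in> E D[X] for some s \<in> S.\<close>
definition ext_poly_mod :: "'k::field set \<Rightarrow> 'k set \<Rightarrow> 'k poly set" where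
  "ext_poly_mod D E = {f. \<exists>(J::nat set) a h. finite J \<and> (\<forall>j\<in>J. a j \<in> E \<and> h j \<in> polys_over D) \<and>
       f = (\<Sum>j\<in>J. [:a j:] * h j)}"

definition circ :: "'k::field set \<Rightarrow> 'k poly set \<Rightarrow> 'k set \<Rightarrow> 'k set" where
  "circ D S E = {x. \<exists>s\<in>S. [:x:] * s \<in> ext_poly_mod D E}"

definition colon :: "'k::field set \<Rightarrow> 'k set \<Rightarrow> 'k set" where
  "colon A E = {x. \<forall>e\<in>E. x * e \<in> A}"

definition v_op :: "'k::field set \<Rightarrow> 'k set \<Rightarrow> 'k set" where
  "v_op A E = colon A (colon A E)"

definition t_op :: "'k::field set \<Rightarrow> 'k set \<Rightarrow> 'k set" where
  "t_op A E = \<Union>{v_op A F | F. F \<subseteq> E \<and> F \<noteq> {0} \<and> fin_gen A F}"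

definition t_ideal :: "'k::field set \<Rightarrow> 'k set \<Rightarrow> bool" where
  "t_ideal A P \<longleftrightarrow> is_ideal A P \<and> P \<noteq> {0} \<and> t_op A P = P"

definition max_t_ideal :: "'k::field set \<Rightarrow> 'k set \<Rightarrow> bool" where
  "max_t_ideal A P \<longleftrightarrow> t_ideal A P \<and> P \<noteq> A \<and>
     (\<forall>Q. t_ideal A Q \<and> Q \<noteq> A \<and> P \<subseteq> Q \<longrightarrow> Q = P)"

definition loc :: "'k::field set \<Rightarrow> 'k set \<Rightarrow> 'k set \<Rightarrow> 'k set" where
  "loc A E P = {x. \<exists>e\<in>E. \<exists>s\<in>A - P. x = e / s}"

definition w_op :: "'k::field set \<Rightarrow> 'k set \<Rightarrow> 'k set" where
  "w_op A E = \<Inter>{loc A E P | P. max_t_ideal A P}"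

definition content_ideal :: "'k::field set \<Rightarrow> 'k poly \<Rightarrow> 'k set" where
  "content_ideal A g = gen A (range (coeff g))"

definition Nv :: "'k::field set \<Rightarrow> 'k poly set" where
  "Nv A = {g. g \<in> polys_over A \<and> g \<noteq> 0 \<and> v_op A (content_ideal A g) = A}"

definition t_linked :: "'k::field set \<Rightarrow> ('k set \<Rightarrow> 'k set) \<Rightarrow> 'k set \<Rightarrow> bool" where
  "t_linked D star R \<longleftrightarrow>
     (\<forall>I. is_ideal D I \<and> I \<noteq> {0} \<and> fin_gen D I \<and> star I = star D \<longrightarrow> t_op R (gen R I) = R)"

definition ext_sat :: "'k::field set \<Rightarrow> 'k poly set \<Rightarrow> 'k poly set" where
  "ext_sat A S = polys_over A -
     \<Union>{polys_over P | P. prime_ideal A P \<and> polys_over P \<inter> S = {}}"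

end

theory Submission
  imports Defs
begin

text \<open>
  Write R = D^{\<circlearrowleft>_S}.  Elementwise, x \<in> E^{\<circlearrowleft>_S} iff some s \<in> S has
  x \<cdot> c(s) \<subseteq> E.  The central observation is a saturation property: if x \<cdot> c(s) \<subseteq> R
  for some s \<in> S, then x \<in> R (multiply the finitely many witnesses together).  It shows
  that R is an overring with R^{\<circlearrowleft>_S} = R and that c_R(s)^{v_R} = R for s \<in> S, i.e.
  S \<subseteq> N^{v_R}; t-linkedness follows since 1 \<in> I^{\<circlearrowleft>_S} yields s \<in> S with c(s) \<subseteq> I.
  For the equivalence we first establish, by Zorn's lemma, that ideals avoiding S in
  the polynomial sense lie in primes avoiding S, and that nonzero ideals I with
  1 \<notin> I^t lie in maximal t-ideals.  Always E^{\<circlearrowleft>_S} \<subseteq> E^{w_R} and S^{\<sharp>} \<subseteq> N^{v_R}.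
  If the two operations agree, testing them on primes P with P[X] \<inter> S = \<emptyset> gives
  N^{v_R} \<subseteq> S^{\<sharp>}.  Conversely, if N^{v_R} = S^{\<sharp>}, such primes satisfy 1 \<notin> P^t, and a
  conductor argument gives E^{w_R} \<subseteq> E^{\<circlearrowleft>_S}.
\<close>

lemma subringD:
  assumes "subring A"
  shows "0 \<in> A" "1 \<in> A" "x \<in> A \<Longrightarrow> y \<in> A \<Longrightarrow> x + y \<in> A"
    "x \<in> A \<Longrightarrow> y \<in> A \<Longrightarrow> x * y \<in> A" "x \<in> A \<Longrightarrow> - x \<in> A"
  using assms unfolding subring_def by auto

lemma subring_submod: "subring A \<Longrightarrow> submod A A"
  unfolding subring_def submod_def by auto

lemma submod_restrict: "submod A E \<Longrightarrow> B \<subseteq> A \<Longrightarrow> submod B E"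
  unfolding submod_def by auto

lemma submod_sum:
  assumes "submod A E" "\<And>x. x \<in> F \<Longrightarrow> f x \<in> E"
  shows "sum f F \<in> E"
  using assms(2)
  by (induction F rule: infinite_finite_induct) (use assms(1) in \<open>simp_all add: submod_def\<close>)

lemma ideal_zero: "is_ideal A I \<Longrightarrow> 0 \<in> I"
  unfolding is_ideal_def submod_def by blast

lemma ideal_unit: "is_ideal A I \<Longrightarrow> 1 \<in> I \<Longrightarrow> I = A"
  unfolding is_ideal_def submod_def by (metis mult.right_neutral subsetI subset_antisym)

lemma nonzero_elementE:
  assumes "0 \<in> I" "I \<noteq> {0}"
  obtains y where "y \<in> I" "y \<noteq> 0"
  using assms by blast

lemma gen_least: "submod A E \<Longrightarrow> G \<subseteq> E \<Longrightarrow> gen A G \<subseteq> E"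
  unfolding gen_def by (auto intro!: submod_sum simp: submod_def)

lemma gen_mono: "G \<subseteq> H \<Longrightarrow> gen A G \<subseteq> gen A H"
  unfolding gen_def by blast

lemma gen_base:
  assumes "1 \<in> A" shows "G \<subseteq> gen A G"
proof
  fix g assume "g \<in> G"
  then show "g \<in> gen A G" unfolding gen_def
    by (intro CollectI exI[of _ "{g}"] exI[of _ "\<lambda>_. 1"]) (use assms in auto)
qed

lemma gen_submod:
  assumes A: "subring A" shows "submod A (gen A G)"
  unfolding submod_def
proof (intro conjI ballI)
  show "0 \<in> gen A G" unfolding gen_def by (intro CollectI exI[of _ "{}"]) auto
next
  fix x y assume "x \<in> gen A G" "y \<in> gen A G"
  then obtain F1 c1 F2 c2 where F1: "finite F1" "F1 \<subseteq> G" "\<forall>g\<in>F1. c1 g \<in> A" "x = (\<Sum>g\<in>F1. c1 g * g)"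
    and F2: "finite F2" "F2 \<subseteq> G" "\<forall>g\<in>F2. c2 g \<in> A" "y = (\<Sum>g\<in>F2. c2 g * g)"
    unfolding gen_def by blast
  text \<open>Extend both coefficient families by zero to the common support F1 \<union> F2.\<close>
  define c where "c g = (if g \<in> F1 then c1 g else 0) + (if g \<in> F2 then c2 g else 0)" for g
  have "(\<Sum>g\<in>F1 \<union> F2. c g * g)
      = (\<Sum>g\<in>F1 \<union> F2. (if g \<in> F1 then c1 g else 0) * g) + (\<Sum>g\<in>F1 \<union> F2. (if g \<in> F2 then c2 g else 0) * g)"
    unfolding c_def distrib_right sum.distrib ..
  also have "\<dots> = x + y"
    unfolding F1(4) F2(4)
    by (intro arg_cong2[where f = "(+)"] sum.mono_neutral_cong_right) (use F1(1) F2(1) in auto)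
  finally have "x + y = (\<Sum>g\<in>F1 \<union> F2. c g * g)" ..
  moreover have "\<forall>g\<in>F1 \<union> F2. c g \<in> A"
    using F1(3) F2(3) subringD[OF A] by (auto simp: c_def)
  ultimately show "x + y \<in> gen A G" unfolding gen_def
    using F1(1,2) F2(1,2) by (intro CollectI exI[of _ "F1 \<union> F2"] exI[of _ c]) blast
next
  fix a x assume a: "a \<in> A" and "x \<in> gen A G"
  then obtain F c where F: "finite F" "F \<subseteq> G" "\<forall>g\<in>F. c g \<in> A" "x = (\<Sum>g\<in>F. c g * g)"
    unfolding gen_def by blast
  have "a * x = (\<Sum>g\<in>F. (a * c g) * g)" unfolding F(4) by (simp add: sum_distrib_left mult.assoc)
  moreover have "\<forall>g\<in>F. a * c g \<in> A" using F(3) a subringD[OF A] by blast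
  ultimately show "a * x \<in> gen A G" unfolding gen_def
    using F(1,2) by (intro CollectI exI[of _ F] exI[of _ "\<lambda>g. a * c g"]) blast
qed

lemma colon_anti: "F \<subseteq> G \<Longrightarrow> colon A G \<subseteq> colon A F"
  unfolding colon_def by auto

lemma colon_self: "subring A \<Longrightarrow> colon A A = A"
  unfolding colon_def subring_def by (auto dest: spec[of _ 1])

lemma v_ext: "F \<subseteq> v_op A F"
  unfolding v_op_def colon_def by (auto simp: mult.commute)

lemma v_mono: "F \<subseteq> G \<Longrightarrow> v_op A F \<subseteq> v_op A G"
  unfolding v_op_def by (intro colon_anti)

lemma v_idem: "v_op A (v_op A F) = v_op A F"
proof -
  have "colon A (v_op A F) = colon A F"
    by (rule subset_antisym[OF colon_anti[OF v_ext]]) (unfold v_op_def, rule v_ext[unfolded v_op_def])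
  then show ?thesis by (simp add: v_op_def)
qed

lemma v_submod: "subring A \<Longrightarrow> submod A (v_op A F)"
  unfolding submod_def v_op_def colon_def subring_def
  by (auto simp: distrib_right mult.assoc)

lemma v_sub: assumes "F \<subseteq> A" shows "v_op A F \<subseteq> A"
proof
  fix x assume "x \<in> v_op A F"
  moreover have "1 \<in> colon A F" using assms unfolding colon_def by auto
  ultimately have "x * 1 \<in> A" unfolding v_op_def colon_def by blast
  then show "x \<in> A" by simp
qed

lemma v_eq_ring:
  assumes "subring A" "1 \<in> v_op A F" "F \<subseteq> A"
  shows "v_op A F = A"
proof
  show "v_op A F \<subseteq> A" by (rule v_sub[OF assms(3)])
  show "A \<subseteq> v_op A F"
    using v_submod[OF assms(1)] assms(2) unfolding submod_def by (metis mult.right_neutral subsetI)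
qed

lemma t_op_intro: "F \<subseteq> E \<Longrightarrow> F \<noteq> {0} \<Longrightarrow> fin_gen A F \<Longrightarrow> v_op A F \<subseteq> t_op A E"
  unfolding t_op_def by blast

lemma t_opE:
  assumes "y \<in> t_op A E"
  obtains G where "finite G" "gen A G \<subseteq> E" "gen A G \<noteq> {0}" "y \<in> v_op A (gen A G)"
proof -
  obtain F where F: "y \<in> v_op A F" "F \<subseteq> E" "F \<noteq> {0}" "fin_gen A F"
    using assms unfolding t_op_def by blast
  then obtain G where "finite G" "F = gen A G" unfolding fin_gen_def by blast
  with F show ?thesis using that by blast
qed

lemma t_op_sub: "E \<subseteq> A \<Longrightarrow> t_op A E \<subseteq> A"
  unfolding t_op_def using v_sub by blast

text \<open>Every nonzero ideal is contained in its t-closure (using two-generated subideals).\<close>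
lemma t_ext:
  assumes A: "subring A" and I: "is_ideal A I" "I \<noteq> {0}"
  shows "I \<subseteq> t_op A I"
proof
  fix x assume x: "x \<in> I"
  obtain y where y: "y \<in> I" "y \<noteq> 0" using ideal_zero[OF I(1)] I(2) by (rule nonzero_elementE)
  let ?F = "gen A {x, y}"
  have xy: "{x, y} \<subseteq> ?F" by (rule gen_base[OF subringD(2)[OF A]])
  have "?F \<subseteq> I" by (rule gen_least) (use I(1) x y in \<open>auto simp: is_ideal_def\<close>)
  moreover have "?F \<noteq> {0}" using xy y(2) by blast
  moreover have "fin_gen A ?F" unfolding fin_gen_def by (intro exI[of _ "{x, y}"]) simp
  ultimately have "v_op A ?F \<subseteq> t_op A I" by (rule t_op_intro)
  then show "x \<in> t_op A I" using xy v_ext[of ?F A] by blast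
qed

lemma polys_over_mono: "A \<subseteq> B \<Longrightarrow> polys_over A \<subseteq> polys_over B"
  unfolding polys_over_def by auto

lemma polys_over_zero: "p \<in> polys_over {0} \<Longrightarrow> p = 0"
  unfolding polys_over_def by (auto intro: poly_eqI)

lemma polys_over_mult:
  assumes P: "submod C P" and AB: "\<And>a b. a \<in> A \<Longrightarrow> b \<in> B \<Longrightarrow> a * b \<in> P"
    and p: "p \<in> polys_over A" and q: "q \<in> polys_over B"
  shows "p * q \<in> polys_over P"
  unfolding polys_over_def
proof (intro CollectI allI)
  fix n show "coeff (p * q) n \<in> P"
    unfolding coeff_mult by (intro submod_sum[OF P] AB) (use p q in \<open>auto simp: polys_over_def\<close>)
qed

lemma polys_over_mult_scalar:
  assumes "submod D E" "p \<in> polys_over E" "q \<in> polys_over D"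
  shows "p * q \<in> polys_over E"
  by (rule polys_over_mult[OF assms(1) _ assms(2,3)]) (use assms(1) in \<open>metis mult.commute submod_def\<close>)

lemma polys_over_sum:
  assumes "submod A E" "\<And>x. x \<in> F \<Longrightarrow> f x \<in> polys_over E"
  shows "sum f F \<in> polys_over E"
  unfolding polys_over_def
proof (intro CollectI allI)
  fix i show "coeff (sum f F) i \<in> E"
    unfolding coeff_sum by (rule submod_sum[OF assms(1)]) (use assms(2) in \<open>auto simp: polys_over_def\<close>)
qed

lemma range_coeff_finite: "finite (range (coeff g))"
proof -
  have "range (coeff g) \<subseteq> insert 0 (coeff g ` {..degree g})"
  proof
    fix c assume "c \<in> range (coeff g)"
    then obtain i where "c = coeff g i" by blast
    then show "c \<in> insert 0 (coeff g ` {..degree g})"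
      by (cases "i \<le> degree g") (auto simp: coeff_eq_0)
  qed
  then show ?thesis by (rule finite_subset) auto
qed

lemma poly_with_coeffs:
  assumes "finite G"
  obtains g where "G \<subseteq> range (coeff g)" "range (coeff g) \<subseteq> insert 0 G"
proof -
  obtain xs where xs: "set xs = G" using finite_list[OF assms] by blast
  have "G \<subseteq> range (coeff (Poly xs))"
  proof
    fix z assume "z \<in> G"
    then obtain k where "k < length xs" "z = xs ! k" using xs by (auto simp: in_set_conv_nth)
    then show "z \<in> range (coeff (Poly xs))" by (metis nth_default_nth coeff_Poly_eq rangeI)
  qed
  moreover have "range (coeff (Poly xs)) \<subseteq> insert 0 G"
    using xs by (auto simp: nth_default_def)
  ultimately show ?thesis by (rule that)
qed

lemma content_least: "submod A E \<Longrightarrow> (\<And>i. coeff g i \<in> E) \<Longrightarrow> content_ideal A g \<subseteq> E"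
  unfolding content_ideal_def by (rule gen_least) auto

lemma coeff_in_content: "1 \<in> A \<Longrightarrow> coeff g i \<in> content_ideal A g"
  unfolding content_ideal_def using gen_base[of A "range (coeff g)"] by auto

lemma content_nonzero: "1 \<in> A \<Longrightarrow> g \<noteq> 0 \<Longrightarrow> content_ideal A g \<noteq> {0}"
  using coeff_in_content[of A g "degree g"] leading_coeff_neq_0[of g] by auto

lemma content_fin_gen: "fin_gen A (content_ideal A g)"
  unfolding fin_gen_def content_ideal_def using range_coeff_finite by blast

lemma content_sub_ring: "subring A \<Longrightarrow> g \<in> polys_over A \<Longrightarrow> content_ideal A g \<subseteq> A"
  by (rule content_least[OF subring_submod]) (auto simp: polys_over_def)

section \<open>The semistar operation E \<mapsto> E D[X]_S \<inter> K\<close>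

lemma mult_subsetD:
  assumes "mult_subset D S"
  shows "S \<subseteq> polys_over D" "1 \<in> S" "0 \<notin> S" "f \<in> S \<Longrightarrow> g \<in> S \<Longrightarrow> f * g \<in> S"
  using assms unfolding mult_subset_def by auto

lemma mult_subset_mono: "mult_subset D S \<Longrightarrow> D \<subseteq> R \<Longrightarrow> mult_subset R S"
  unfolding mult_subset_def using polys_over_mono by blast

lemma prod_in_mult_subset:
  assumes "mult_subset D S" "\<And>i. i \<in> I \<Longrightarrow> t i \<in> S"
  shows "prod t I \<in> S"
  using assms(2)
  by (induction I rule: infinite_finite_induct) (simp_all add: mult_subsetD[OF assms(1)])

lemma ext_poly_mod_eq:
  assumes D: "subring D" and E: "submod D E"
  shows "ext_poly_mod D E = polys_over E"
proof
  show "ext_poly_mod D E \<subseteq> polys_over E"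
  proof
    fix f assume "f \<in> ext_poly_mod D E"
    then obtain J :: "nat set" and a h where J: "\<forall>j\<in>J. a j \<in> E \<and> h j \<in> polys_over D"
      and f: "f = (\<Sum>j\<in>J. [:a j:] * h j)" unfolding ext_poly_mod_def by blast
    have "[:a j:] * h j \<in> polys_over E" if "j \<in> J" for j
    proof (rule polys_over_mult_scalar[OF E])
      show "[:a j:] \<in> polys_over E"
        using J that E unfolding polys_over_def submod_def by (auto simp: coeff_pCons split: nat.split)
      show "h j \<in> polys_over D" using J that by blast
    qed
    then show "f \<in> polys_over E" unfolding f by (rule polys_over_sum[OF E])
  qed
next
  show "polys_over E \<subseteq> ext_poly_mod D E"
  proof
    fix f assume f: "f \<in> polys_over E"
    have "f = (\<Sum>i\<in>{..degree f}. [:coeff f i:] * monom 1 i)"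
      by (simp add: smult_monom poly_as_sum_of_monoms)
    moreover have "\<forall>i\<in>{..degree f}. coeff f i \<in> E \<and> monom 1 i \<in> polys_over D"
      using f subringD(1,2)[OF D] unfolding polys_over_def by (auto simp: coeff_monom)
    ultimately show "f \<in> ext_poly_mod D E" unfolding ext_poly_mod_def
      by (intro CollectI exI[of _ "{..degree f}"] exI[of _ "coeff f"] exI[of _ "\<lambda>i. monom 1 i"]) simp
  qed
qed

lemma circ_iff:
  assumes "subring D" "submod D E"
  shows "x \<in> circ D S E \<longleftrightarrow> (\<exists>s\<in>S. \<forall>i. x * coeff s i \<in> E)"
  unfolding circ_def ext_poly_mod_eq[OF assms] polys_over_def by simp

lemma circ_ring_iff:
  "subring D \<Longrightarrow> x \<in> circ D S D \<longleftrightarrow> (\<exists>s\<in>S. \<forall>i. x * coeff s i \<in> D)"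
  by (rule circ_iff[OF _ subring_submod])

lemma witness_mult:
  assumes E: "submod D E" and x: "\<And>i. x * coeff s i \<in> E" and t: "t \<in> polys_over D"
  shows "x * coeff (s * t) n \<in> E"
proof -
  have "smult x s \<in> polys_over E" using x by (simp add: polys_over_def)
  then have "smult x s * t \<in> polys_over E" by (rule polys_over_mult_scalar[OF E _ t])
  then show ?thesis by (simp add: polys_over_def mult_smult_left)
qed

lemma circ_ext:
  assumes D: "subring D" and S: "mult_subset D S" and E: "submod D E"
  shows "E \<subseteq> circ D S E"
proof
  fix x assume "x \<in> E"
  then have "\<forall>i. x * coeff 1 i \<in> E" using E by (simp add: coeff_1 submod_def)
  then show "x \<in> circ D S E" unfolding circ_iff[OF D E] using mult_subsetD(2)[OF S] by blast
qed

text \<open>One combines the witnesses of the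
  finitely many products x \<cdot> s_i into their product T \<in> S, which witnesses x via s T.\<close>
lemma circ_coeff_saturated:
  assumes D: "subring D" and S: "mult_subset D S" and E: "submod D E" and s: "s \<in> S"
    and x: "\<And>i. x * coeff s i \<in> circ D S E"
  shows "x \<in> circ D S E"
proof -
  have "\<forall>i. \<exists>t\<in>S. \<forall>j. x * coeff s i * coeff t j \<in> E" using x unfolding circ_iff[OF D E] by blast
  then obtain t where t: "\<And>i. t i \<in> S" "\<And>i j. x * coeff s i * coeff (t i) j \<in> E"
    by metis
  define T where "T = prod t {..degree s}"
  have T: "T \<in> S" unfolding T_def by (rule prod_in_mult_subset[OF S]) (use t in auto)
  have ST: "\<And>u. u \<in> S \<Longrightarrow> u \<in> polys_over D" using mult_subsetD(1)[OF S] by blast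
  have main: "x * coeff s i * coeff T m \<in> E" for i m
  proof (cases "i \<le> degree s")
    case False then show ?thesis using E by (simp add: coeff_eq_0 submod_def)
  next
    case True
    define T' where "T' = prod t ({..degree s} - {i})"
    have "T' \<in> S" unfolding T'_def by (rule prod_in_mult_subset[OF S]) (use t in auto)
    moreover have "T = t i * T'" unfolding T_def T'_def using True by (simp add: prod.remove)
    ultimately show ?thesis using witness_mult[OF E t(2) ST] by simp
  qed
  have "x * coeff (s * T) n \<in> E" for n
  proof -
    have "x * coeff (s * T) n = (\<Sum>i\<le>n. x * coeff s i * coeff T (n - i))"
      by (simp add: coeff_mult sum_distrib_left mult.assoc)
    also have "\<dots> \<in> E" by (rule submod_sum[OF E]) (rule main)
    finally show ?thesis .
  qed
  then show ?thesis unfolding circ_iff[OF D E] using mult_subsetD(4)[OF S s T] by blast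
qed

lemma circ_subring:
  assumes D: "subring D" and S: "mult_subset D S"
  shows "subring (circ D S D)"
proof -
  let ?R = "circ D S D"
  have DD: "submod D D" by (rule subring_submod[OF D])
  note ST = mult_subsetD(1)[OF S]
  have closed: "x + y \<in> ?R \<and> x * y \<in> ?R" if xR: "x \<in> ?R" and yR: "y \<in> ?R" for x y
  proof -
    obtain s where s: "s \<in> S" and x: "\<And>i. x * coeff s i \<in> D"
      using xR unfolding circ_ring_iff[OF D] by blast
    obtain t where t: "t \<in> S" and y: "\<And>i. y * coeff t i \<in> D"
      using yR unfolding circ_ring_iff[OF D] by blast
    note st = s t
    have "(x + y) * coeff (s * t) n \<in> D" for n
    proof -
      have "(x + y) * coeff (s * t) n = x * coeff (s * t) n + y * coeff (t * s) n"
        by (simp add: distrib_right mult.commute)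
      moreover have "x * coeff (s * t) n \<in> D" "y * coeff (t * s) n \<in> D"
        using witness_mult[OF DD x] witness_mult[OF DD y] ST st by blast+
      ultimately show ?thesis using subringD(3)[OF D] by simp
    qed
    moreover have "(x * y) * coeff (s * t) n \<in> D" for n
    proof -
      have "smult x s * smult y t \<in> polys_over D"
        by (rule polys_over_mult_scalar[OF DD]) (use x y in \<open>simp_all add: polys_over_def\<close>)
      then show ?thesis by (simp add: polys_over_def mult_ac)
    qed
    ultimately show ?thesis unfolding circ_ring_iff[OF D] using mult_subsetD(4)[OF S st] by blast
  qed
  have neg: "- x \<in> ?R" if xR: "x \<in> ?R" for x
  proof -
    obtain s where "s \<in> S" "\<And>i. x * coeff s i \<in> D" using xR unfolding circ_ring_iff[OF D] by blast
    then show ?thesis unfolding circ_ring_iff[OF D] using subringD(5)[OF D] by fastforce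
  qed
  have "0 \<in> ?R" "1 \<in> ?R" using circ_ext[OF D S DD] subringD(1,2)[OF D] by blast+
  then show ?thesis unfolding subring_def using closed neg by blast
qed

lemma D_sub_circ: "subring D \<Longrightarrow> mult_subset D S \<Longrightarrow> D \<subseteq> circ D S D"
  by (rule circ_ext[OF _ _ subring_submod])

text \<open>The operation fixes R, i.e. its restriction to R-modules is a (semi)star
  operation on R.\<close>
lemma circ_fixes_ring:
  assumes D: "subring D" and S: "mult_subset D S"
  shows "circ D S (circ D S D) = circ D S D"
proof
  let ?R = "circ D S D"
  have RD: "submod D ?R"
    by (rule submod_restrict[OF subring_submod[OF circ_subring[OF D S]] D_sub_circ[OF D S]])
  show "circ D S ?R \<subseteq> ?R"
  proof
    fix x assume "x \<in> circ D S ?R"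
    then obtain s where "s \<in> S" "\<And>i. x * coeff s i \<in> ?R" unfolding circ_iff[OF D RD] by blast
    then show "x \<in> ?R" by (rule circ_coeff_saturated[OF D S subring_submod[OF D]])
  qed
  show "?R \<subseteq> circ D S ?R" by (rule circ_ext[OF D S RD])
qed

lemma mult_subset_in_Nv:
  assumes D: "subring D" and S: "mult_subset D S" and s: "s \<in> S"
  shows "s \<in> Nv (circ D S D)"
proof -
  let ?R = "circ D S D"
  have R: "subring ?R" by (rule circ_subring[OF D S])
  have sR: "s \<in> polys_over ?R"
    using s mult_subsetD(1)[OF S] polys_over_mono[OF D_sub_circ[OF D S]] by blast
  have cR: "content_ideal ?R s \<subseteq> ?R" by (rule content_sub_ring[OF R sR])
  have "colon ?R (content_ideal ?R s) \<subseteq> ?R"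
  proof
    fix y assume "y \<in> colon ?R (content_ideal ?R s)"
    then have "y * coeff s i \<in> ?R" for i
      using coeff_in_content[OF subringD(2)[OF R]] unfolding colon_def by blast
    then show "y \<in> ?R" by (rule circ_coeff_saturated[OF D S subring_submod[OF D] s])
  qed
  moreover have "?R \<subseteq> colon ?R (content_ideal ?R s)"
    using cR subringD(4)[OF R] unfolding colon_def by blast
  ultimately have "v_op ?R (content_ideal ?R s) = ?R"
    unfolding v_op_def using colon_self[OF R] by simp
  moreover have "s \<noteq> 0" using s mult_subsetD(3)[OF S] by blast
  ultimately show ?thesis using sR unfolding Nv_def by blast
qed

text \<open>R is t-linked to (D, \<circlearrowleft>_S): if I^{\<circlearrowleft>_S} = D^{\<circlearrowleft>_S}, then 1 \<in> I^{\<circlearrowleft>_S}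
  gives some s \<in> S with c(s) \<subseteq> I, and c_R(s)^{v_R} = R forces (IR)^{t_R} = R.\<close>
lemma circ_t_linked:
  assumes D: "subring D" and S: "mult_subset D S"
  shows "t_linked D (circ D S) (circ D S D)"
  unfolding t_linked_def
proof (intro allI impI)
  let ?R = "circ D S D"
  have R: "subring ?R" by (rule circ_subring[OF D S])
  fix I assume I: "is_ideal D I \<and> I \<noteq> {0} \<and> fin_gen D I \<and> circ D S I = circ D S D"
  have ID: "submod D I" "I \<subseteq> D" using I by (auto simp: is_ideal_def)
  have "1 \<in> circ D S I" using I subringD(2)[OF R] by simp
  then obtain s where s: "s \<in> S" "\<And>i. coeff s i \<in> I" unfolding circ_iff[OF D ID(1)] by auto
  have IR: "gen ?R I \<subseteq> ?R"
    by (rule gen_least[OF subring_submod[OF R]]) (use ID(2) D_sub_circ[OF D S] in blast)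
  have "content_ideal ?R s \<subseteq> gen ?R I"
    unfolding content_ideal_def by (rule gen_mono) (use s(2) in auto)
  moreover have Nv: "s \<in> Nv ?R" by (rule mult_subset_in_Nv[OF D S s(1)])
  moreover have "content_ideal ?R s \<noteq> {0}"
    using Nv subringD(2)[OF R] content_nonzero unfolding Nv_def by blast
  ultimately have "v_op ?R (content_ideal ?R s) \<subseteq> t_op ?R (gen ?R I)"
    using t_op_intro content_fin_gen by blast
  then show "t_op ?R (gen ?R I) = ?R" using Nv t_op_sub[OF IR] unfolding Nv_def by blast
qed

section \<open>Zorn's lemma for ideals: primes avoiding S and maximal t-ideals\<close>

lemma chain_finite_subset:
  assumes "finite G" "G \<subseteq> \<Union>C" "C \<noteq> {}" "\<forall>X\<in>C. \<forall>Y\<in>C. X \<subseteq> Y \<or> Y \<subseteq> X"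
  shows "\<exists>Q\<in>C. G \<subseteq> Q"
  using assms(1,2)
proof (induction G rule: finite_induct)
  case empty then show ?case using assms(3) by blast
next
  case (insert x G)
  then obtain Q Q' where Q: "Q \<in> C" "G \<subseteq> Q" "Q' \<in> C" "x \<in> Q'" by blast
  then consider "Q \<subseteq> Q'" | "Q' \<subseteq> Q" using assms(4) by blast
  then show ?case using Q by cases blast+
qed

lemma chain_ideal:
  assumes "C \<noteq> {}" "\<forall>Q\<in>C. is_ideal R Q" "\<forall>X\<in>C. \<forall>Y\<in>C. X \<subseteq> Y \<or> Y \<subseteq> X"
  shows "is_ideal R (\<Union>C)"
  unfolding is_ideal_def submod_def
proof (intro conjI ballI)
  show "0 \<in> \<Union>C" using assms(1,2) ideal_zero by blast
next
  fix x y assume "x \<in> \<Union>C" "y \<in> \<Union>C"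
  then obtain Q where "Q \<in> C" "x \<in> Q" "y \<in> Q" using assms(3) by blast
  then show "x + y \<in> \<Union>C" using assms(2) unfolding is_ideal_def submod_def by blast
next
  fix a x assume "a \<in> R" "x \<in> \<Union>C"
  then show "a * x \<in> \<Union>C" using assms(2) unfolding is_ideal_def submod_def by blast
next
  show "\<Union>C \<subseteq> R" using assms(2) unfolding is_ideal_def by blast
qed

lemma ideal_Zorn:
  assumes I: "is_ideal R I" "\<Phi> I"
    and chain: "\<And>C. C \<noteq> {} \<Longrightarrow> \<forall>Q\<in>C. is_ideal R Q \<and> \<Phi> Q \<Longrightarrow>
                   \<forall>X\<in>C. \<forall>Y\<in>C. X \<subseteq> Y \<or> Y \<subseteq> X \<Longrightarrow> \<Phi> (\<Union>C)"
  obtains M where "is_ideal R M" "I \<subseteq> M" "\<Phi> M"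
    "\<And>Q. is_ideal R Q \<Longrightarrow> M \<subseteq> Q \<Longrightarrow> \<Phi> Q \<Longrightarrow> Q = M"
proof -
  define Z where "Z = {Q. is_ideal R Q \<and> I \<subseteq> Q \<and> \<Phi> Q}"
  have "\<exists>M\<in>Z. \<forall>X\<in>Z. M \<subseteq> X \<longrightarrow> X = M"
  proof (rule subset_Zorn_nonempty)
    show "Z \<noteq> {}" using I unfolding Z_def by blast
  next
    fix C assume C: "C \<noteq> {}" "subset.chain Z C"
    then have CZ: "\<forall>Q\<in>C. is_ideal R Q \<and> I \<subseteq> Q \<and> \<Phi> Q" and ch: "\<forall>X\<in>C. \<forall>Y\<in>C. X \<subseteq> Y \<or> Y \<subseteq> X"
      unfolding subset_chain_def Z_def by auto
    have "is_ideal R (\<Union>C)" using chain_ideal[OF C(1) _ ch] CZ by blast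
    moreover have "I \<subseteq> \<Union>C" using C(1) CZ by blast
    moreover have "\<Phi> (\<Union>C)" using chain[OF C(1) _ ch] CZ by blast
    ultimately show "\<Union>C \<in> Z" unfolding Z_def by blast
  qed
  then obtain M where M: "is_ideal R M" "I \<subseteq> M" "\<Phi> M" and max: "\<forall>X\<in>Z. M \<subseteq> X \<longrightarrow> X = M"
    unfolding Z_def by blast
  show ?thesis
  proof (rule that[OF M])
    fix Q assume "is_ideal R Q" "M \<subseteq> Q" "\<Phi> Q"
    then show "Q = M" using max M(2) unfolding Z_def by blast
  qed
qed

definition adjoin :: "'k::field set \<Rightarrow> 'k set \<Rightarrow> 'k \<Rightarrow> 'k set" where
  "adjoin R P a = {p + a * r | p r. p \<in> P \<and> r \<in> R}"

lemma adjoin: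
  assumes R: "subring R" and P: "is_ideal R P" and a: "a \<in> R"
  shows "is_ideal R (adjoin R P a)" "P \<subseteq> adjoin R P a" "a \<in> adjoin R P a"
proof -
  note Rd = subringD[OF R]
  have PR: "P \<subseteq> R" and Pd: "0 \<in> P" "\<forall>x\<in>P. \<forall>y\<in>P. x + y \<in> P" "\<forall>b\<in>R. \<forall>x\<in>P. b * x \<in> P"
    using P unfolding is_ideal_def submod_def by auto
  show "P \<subseteq> adjoin R P a" unfolding adjoin_def using Rd(1) by force
  show "a \<in> adjoin R P a" unfolding adjoin_def using Rd(2) Pd(1) by force
  show "is_ideal R (adjoin R P a)" unfolding is_ideal_def submod_def
  proof (intro conjI ballI)
    show "0 \<in> adjoin R P a" unfolding adjoin_def using Rd(1) Pd(1) by force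
  next
    fix x y assume "x \<in> adjoin R P a" "y \<in> adjoin R P a"
    then obtain p r p' r' where "p \<in> P" "r \<in> R" "x = p + a * r" "p' \<in> P" "r' \<in> R" "y = p' + a * r'"
      unfolding adjoin_def by blast
    moreover have "x + y = (p + p') + a * (r + r')" using calculation by (simp add: algebra_simps)
    ultimately show "x + y \<in> adjoin R P a" unfolding adjoin_def using Pd(2) Rd(3) by blast
  next
    fix b x assume b: "b \<in> R" and "x \<in> adjoin R P a"
    then obtain p r where pr: "p \<in> P" "r \<in> R" "x = p + a * r" unfolding adjoin_def by blast
    have "b * x = b * p + a * (b * r)" using pr by (simp add: algebra_simps)
    then show "b * x \<in> adjoin R P a" unfolding adjoin_def using Pd(3) Rd(4) b pr by blast
  next
    show "adjoin R P a \<subseteq> R" unfolding adjoin_def using PR Rd(3,4) a by blast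
  qed
qed

lemma adjoin_mult:
  assumes R: "subring R" and P: "is_ideal R P" and a: "a \<in> R" and b: "b \<in> R" and ab: "a * b \<in> P"
    and u: "u \<in> adjoin R P a" and w: "w \<in> adjoin R P b"
  shows "u * w \<in> P"
proof -
  note Rd = subringD[OF R]
  have PR: "P \<subseteq> R" and Pd: "\<forall>x\<in>P. \<forall>y\<in>P. x + y \<in> P" "\<forall>c\<in>R. \<forall>x\<in>P. c * x \<in> P"
    using P unfolding is_ideal_def submod_def by auto
  obtain p r where pr: "p \<in> P" "r \<in> R" "u = p + a * r" using u unfolding adjoin_def by blast
  obtain p' r' where pr': "p' \<in> P" "r' \<in> R" "w = p' + b * r'" using w unfolding adjoin_def by blast
  have "u * w = (p' + b * r') * p + (a * r) * p' + (r * r') * (a * b)"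
    using pr pr' by (simp add: algebra_simps)
  moreover have "p' + b * r' \<in> R" "a * r \<in> R" "r * r' \<in> R" using pr pr' PR Rd(3,4) a b by blast+
  ultimately show ?thesis using Pd pr(1) pr'(1) ab by simp
qed

lemma maximal_avoiding_prime:
  assumes R: "subring R" and S: "mult_subset R S"
    and P: "is_ideal R P" "polys_over P \<inter> S = {}"
    and max: "\<And>Q. is_ideal R Q \<Longrightarrow> P \<subseteq> Q \<Longrightarrow> polys_over Q \<inter> S = {} \<Longrightarrow> Q = P"
  shows "prime_ideal R P"
  unfolding prime_ideal_def
proof (intro conjI ballI impI P(1))
  show "P \<noteq> R"
  proof
    assume "P = R"
    then have "1 \<in> polys_over P" using subringD(1,2)[OF R] by (simp add: polys_over_def coeff_1)
    then show False using P(2) mult_subsetD(2)[OF S] by blast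
  qed
next
  fix a b assume a: "a \<in> R" and b: "b \<in> R" and ab: "a * b \<in> P"
  show "a \<in> P \<or> b \<in> P"
  proof (rule ccontr)
    assume nab: "\<not> (a \<in> P \<or> b \<in> P)"
    text \<open>By maximality, both P + aR and P + bR contain the coefficients of some element of S.\<close>
    have meets: "\<exists>s\<in>S. s \<in> polys_over (adjoin R P c)" if c: "c \<in> R" "c \<notin> P" for c
      using max[OF adjoin(1,2)[OF R P(1) c(1)]] adjoin(3)[OF R P(1) c(1)] c(2) by blast
    obtain s1 where s1: "s1 \<in> S" "s1 \<in> polys_over (adjoin R P a)" using meets a nab by blast
    obtain s2 where s2: "s2 \<in> S" "s2 \<in> polys_over (adjoin R P b)" using meets b nab by blast
    have "s1 * s2 \<in> polys_over P"
      using polys_over_mult[OF _ adjoin_mult[OF R P(1) a b ab] s1(2) s2(2)] P(1)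
      unfolding is_ideal_def by blast
    then show False using P(2) mult_subsetD(4)[OF S s1(1) s2(1)] by blast
  qed
qed

lemma polys_over_chain:
  assumes "s \<in> polys_over (\<Union>C)" "C \<noteq> {}" "\<forall>X\<in>C. \<forall>Y\<in>C. X \<subseteq> Y \<or> Y \<subseteq> X" "\<forall>Q\<in>C. 0 \<in> Q"
  shows "\<exists>Q\<in>C. s \<in> polys_over Q"
proof -
  have "coeff s ` {..degree s} \<subseteq> \<Union>C" using assms(1) unfolding polys_over_def by blast
  then obtain Q where Q: "Q \<in> C" "coeff s ` {..degree s} \<subseteq> Q"
    using chain_finite_subset[OF _ _ assms(2,3)] by blast
  have "coeff s i \<in> Q" for i
    using Q assms(4) by (cases "i \<le> degree s") (auto simp: coeff_eq_0)
  then show ?thesis using Q(1) unfolding polys_over_def by blast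
qed

lemma prime_avoiding_exists:
  assumes R: "subring R" and S: "mult_subset R S"
    and I: "is_ideal R I" "polys_over I \<inter> S = {}"
  obtains P where "prime_ideal R P" "I \<subseteq> P" "polys_over P \<inter> S = {}"
proof -
  have chain: "polys_over (\<Union>C) \<inter> S = {}"
    if "C \<noteq> {}" "\<forall>Q\<in>C. is_ideal R Q \<and> polys_over Q \<inter> S = {}" "\<forall>X\<in>C. \<forall>Y\<in>C. X \<subseteq> Y \<or> Y \<subseteq> X"
    for C using polys_over_chain[OF _ that(1,3)] that(2) ideal_zero by blast
  obtain P where "is_ideal R P" "I \<subseteq> P" "polys_over P \<inter> S = {}"
      "\<And>Q. is_ideal R Q \<Longrightarrow> P \<subseteq> Q \<Longrightarrow> polys_over Q \<inter> S = {} \<Longrightarrow> Q = P"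
    by (rule ideal_Zorn[of R I "\<lambda>Q. polys_over Q \<inter> S = {}", OF I chain]) blast+
  with maximal_avoiding_prime[OF R S] show ?thesis using that by blast
qed

text \<open>Finitely many generators of M + yR are written as m + y r;
  the m's together with generators of a finite F \<subseteq> M with y \<in> F^v span a finite
  H \<subseteq> M with 1 \<in> H^v.\<close>
lemma t_unit_adjoin:
  assumes R: "subring R" and M: "is_ideal R M"
    and y: "y \<in> t_op R M" and unit: "1 \<in> t_op R (adjoin R M y)"
  shows "1 \<in> t_op R M"
proof -
  note Rd = subringD[OF R]
  have Mm: "submod R M" and MR: "M \<subseteq> R" using M unfolding is_ideal_def by auto
  obtain G0 where G0: "finite G0" "gen R G0 \<subseteq> M" "gen R G0 \<noteq> {0}" "y \<in> v_op R (gen R G0)"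
    using y by (rule t_opE)
  obtain G where G: "finite G" "gen R G \<subseteq> adjoin R M y" "1 \<in> v_op R (gen R G)"
    using unit by (rule t_opE)
  have "\<forall>g\<in>G. \<exists>m. m \<in> M \<and> (\<exists>r. r \<in> R \<and> g = m + y * r)"
    using G(2) gen_base[OF Rd(2), of G] unfolding adjoin_def by blast
  then obtain m where "\<forall>g\<in>G. m g \<in> M \<and> (\<exists>r. r \<in> R \<and> g = m g + y * r)"
    by (rule bchoice[elim_format]) blast
  moreover from this have "\<forall>g\<in>G. \<exists>r. r \<in> R \<and> g = m g + y * r" by blast
  then obtain r where "\<forall>g\<in>G. r g \<in> R \<and> g = m g + y * r g"
    by (rule bchoice[elim_format]) blast
  ultimately have mr: "\<And>g. g \<in> G \<Longrightarrow> m g \<in> M \<and> r g \<in> R \<and> g = m g + y * r g" by blast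
  let ?H = "gen R (m ` G \<union> G0)"
  have HM: "?H \<subseteq> M"
    by (rule gen_least[OF Mm]) (use mr G0(2) gen_base[OF Rd(2), of G0] in blast)
  have G0H: "gen R G0 \<subseteq> ?H" by (rule gen_mono) blast
  have "?H \<noteq> {0}" using G0(3) G0H gen_submod[OF R, of G0] unfolding submod_def by blast
  moreover have "fin_gen R ?H" unfolding fin_gen_def using G0(1) G(1)
    by (intro exI[of _ "m ` G \<union> G0"]) simp
  ultimately have Ht: "v_op R ?H \<subseteq> t_op R M" by (rule t_op_intro[OF HM])
  have vH: "submod R (v_op R ?H)" by (rule v_submod[OF R])
  have yH: "y \<in> v_op R ?H" using G0(4) v_mono[OF G0H] by blast
  have "G \<subseteq> v_op R ?H"
  proof
    fix g assume g: "g \<in> G"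
    have "m g \<in> v_op R ?H" using gen_base[OF Rd(2), of "m ` G \<union> G0"] v_ext g by blast
    moreover have "r g * y \<in> v_op R ?H" using vH mr[OF g] yH unfolding submod_def by blast
    ultimately have "m g + r g * y \<in> v_op R ?H" using vH unfolding submod_def by blast
    then show "g \<in> v_op R ?H" using mr[OF g] by (simp add: mult.commute)
  qed
  then have "gen R G \<subseteq> v_op R ?H" by (rule gen_least[OF vH])
  then have "v_op R (gen R G) \<subseteq> v_op R ?H" using v_mono v_idem by metis
  then show ?thesis using G(3) Ht by blast
qed

lemma maximal_t_proper_is_max_t:
  assumes R: "subring R" and M: "is_ideal R M" "M \<noteq> {0}" "1 \<notin> t_op R M"
    and max: "\<And>Q. is_ideal R Q \<Longrightarrow> M \<subseteq> Q \<Longrightarrow> 1 \<notin> t_op R Q \<Longrightarrow> Q = M"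
  shows "max_t_ideal R M"
proof -
  have ext: "M \<subseteq> t_op R M" by (rule t_ext[OF R M(1,2)])
  have "t_op R M \<subseteq> M"
  proof
    fix y assume y: "y \<in> t_op R M"
    have yR: "y \<in> R" using y t_op_sub M(1) unfolding is_ideal_def by blast
    have "1 \<in> t_op R (adjoin R M y)" if "y \<notin> M"
      using max[OF adjoin(1,2)[OF R M(1) yR]] adjoin(3)[OF R M(1) yR] that by blast
    then show "y \<in> M" using t_unit_adjoin[OF R M(1) y] M(3) by blast
  qed
  then have tM: "t_ideal R M" unfolding t_ideal_def using M(1,2) ext by blast
  moreover have "M \<noteq> R" using ext M(3) subringD(2)[OF R] by blast
  moreover have "Q = M" if "t_ideal R Q" "Q \<noteq> R" "M \<subseteq> Q" for Q
  proof -
    have "1 \<notin> Q" using that(1,2) ideal_unit unfolding t_ideal_def by blast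
    then have "1 \<notin> t_op R Q" using that(1) unfolding t_ideal_def by simp
    then show "Q = M" using max that unfolding t_ideal_def by blast
  qed
  ultimately show ?thesis unfolding max_t_ideal_def by blast
qed

lemma max_t_ideal_exists:
  assumes R: "subring R" and P: "is_ideal R P" "P \<noteq> {0}" "1 \<notin> t_op R P"
  obtains M where "max_t_ideal R M" "P \<subseteq> M"
proof -
  have chain: "1 \<notin> t_op R (\<Union>C)"
    if C: "C \<noteq> {}" "\<forall>Q\<in>C. is_ideal R Q \<and> 1 \<notin> t_op R Q" and ch: "\<forall>X\<in>C. \<forall>Y\<in>C. X \<subseteq> Y \<or> Y \<subseteq> X"
    for C
  proof
    assume "1 \<in> t_op R (\<Union>C)"
    then obtain G where G: "finite G" "gen R G \<subseteq> \<Union>C" "gen R G \<noteq> {0}" "1 \<in> v_op R (gen R G)"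
      by (rule t_opE)
    have "G \<subseteq> \<Union>C" using G(2) gen_base[OF subringD(2)[OF R], of G] by blast
    then obtain Q where Q: "Q \<in> C" "G \<subseteq> Q" using chain_finite_subset[OF G(1) _ C(1) ch] by blast
    have "gen R G \<subseteq> Q" by (rule gen_least) (use Q C(2) in \<open>auto simp: is_ideal_def\<close>)
    then have "v_op R (gen R G) \<subseteq> t_op R Q"
      using t_op_intro G(1,3) unfolding fin_gen_def by blast
    then show False using G(4) Q(1) C(2) by blast
  qed
  obtain M where M: "is_ideal R M" "P \<subseteq> M" "1 \<notin> t_op R M"
      "\<And>Q. is_ideal R Q \<Longrightarrow> M \<subseteq> Q \<Longrightarrow> 1 \<notin> t_op R Q \<Longrightarrow> Q = M"
    by (rule ideal_Zorn[of R P "\<lambda>Q. 1 \<notin> t_op R Q", OF P(1,3) chain]) blast+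
  have "M \<noteq> {0}" using M(2) P(2) ideal_zero[OF P(1)] by blast
  then have "max_t_ideal R M" using maximal_t_proper_is_max_t[OF R M(1) _ M(3,4)] by blast
  then show ?thesis using that M(2) by blast
qed

section \<open>Polynomials of N^{v_R} and the w-operation\<close>

lemma max_t_ideal_zero: "max_t_ideal R M \<Longrightarrow> 0 \<in> M"
  unfolding max_t_ideal_def t_ideal_def by (blast intro: ideal_zero)

lemma Nv_not_in_max_t:
  assumes R: "subring R" and M: "max_t_ideal R M" and g: "g \<in> Nv R"
  obtains i where "coeff g i \<notin> M"
proof -
  have Mi: "is_ideal R M" "t_op R M = M" "M \<noteq> R"
    using M unfolding max_t_ideal_def t_ideal_def by auto
  have "\<not> content_ideal R g \<subseteq> M"
  proof
    assume "content_ideal R g \<subseteq> M"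
    moreover have "content_ideal R g \<noteq> {0}"
      using g content_nonzero[OF subringD(2)[OF R]] unfolding Nv_def by blast
    ultimately have "v_op R (content_ideal R g) \<subseteq> t_op R M" using t_op_intro content_fin_gen by blast
    then have "R \<subseteq> M" using g Mi(2) unfolding Nv_def by simp
    then show False using Mi(1,3) unfolding is_ideal_def by blast
  qed
  then show ?thesis using that content_least[of R M g] Mi(1) unfolding is_ideal_def by blast
qed

text \<open>If some g \<in> N^{v_R} multiplies x into E coefficientwise, then x \<in> E^{w_R}:
  locally at a maximal t-ideal M some coefficient of g is a unit.\<close>
lemma w_op_intro:
  assumes R: "subring R" and g: "g \<in> Nv R" and x: "\<And>i. coeff g i * x \<in> E"
  shows "x \<in> w_op R E"
  unfolding w_op_def
proof (rule InterI)
  fix L assume "L \<in> {loc R E M |M. max_t_ideal R M}"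
  then obtain M where L: "L = loc R E M" and M: "max_t_ideal R M" by blast
  obtain i where i: "coeff g i \<notin> M" using Nv_not_in_max_t[OF R M g] .
  have "coeff g i \<noteq> 0" using i max_t_ideal_zero[OF M] by auto
  then have "x = (coeff g i * x) / coeff g i" by simp
  moreover have "coeff g i \<in> R" using g unfolding Nv_def polys_over_def by blast
  ultimately show "x \<in> L" unfolding L loc_def using x i by blast
qed

text \<open>The easy inclusion E^{\<circlearrowleft>_S} \<subseteq> E^{w_R}, from S \<subseteq> N^{v_R}.\<close>
lemma circ_sub_w:
  assumes D: "subring D" and S: "mult_subset D S" and E: "submod (circ D S D) E"
  shows "circ D S E \<subseteq> w_op (circ D S D) E"
proof
  have ED: "submod D E" by (rule submod_restrict[OF E D_sub_circ[OF D S]])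
  fix x assume "x \<in> circ D S E"
  then obtain s where s: "s \<in> S" "\<And>i. x * coeff s i \<in> E" unfolding circ_iff[OF D ED] by blast
  show "x \<in> w_op (circ D S D) E"
    by (rule w_op_intro[OF circ_subring[OF D S] mult_subset_in_Nv[OF D S s(1)]])
      (use s(2) in \<open>simp add: mult.commute\<close>)
qed

lemma ext_satD: "g \<in> ext_sat R S \<Longrightarrow> prime_ideal R P \<Longrightarrow> polys_over P \<inter> S = {} \<Longrightarrow> g \<notin> polys_over P"
  unfolding ext_sat_def by blast

lemma zero_prime: assumes "subring R" shows "prime_ideal R {0}"
  unfolding prime_ideal_def is_ideal_def submod_def using subringD[OF assms] by auto

text \<open>Whenever S \<subseteq> N^{v_R}, the extended saturation of S is contained in N^{v_R}:
  if c(g)^v \<noteq> R then c(g) misses S, hence lies in a prime P with P[X] \<inter> S = \<emptyset>.\<close>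
lemma ext_sat_sub_Nv:
  assumes R: "subring R" and S: "mult_subset R S" and SNv: "S \<subseteq> Nv R"
  shows "ext_sat R S \<subseteq> Nv R"
proof
  fix g assume g: "g \<in> ext_sat R S"
  have gR: "g \<in> polys_over R" using g unfolding ext_sat_def by blast
  have "polys_over {0} \<inter> S = {}" using mult_subsetD(3)[OF S] polys_over_zero by blast
  then have "g \<noteq> 0" using ext_satD[OF g zero_prime[OF R]] unfolding polys_over_def by auto
  let ?C = "content_ideal R g"
  have Cm: "submod R ?C" unfolding content_ideal_def by (rule gen_submod[OF R])
  have CR: "?C \<subseteq> R" by (rule content_sub_ring[OF R gR])
  have "v_op R ?C = R"
  proof (cases "\<exists>s\<in>S. s \<in> polys_over ?C")
    case True
    then obtain s where s: "s \<in> S" "s \<in> polys_over ?C" by blast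
    have "content_ideal R s \<subseteq> ?C" by (rule content_least[OF Cm]) (use s(2) in \<open>auto simp: polys_over_def\<close>)
    then have "v_op R (content_ideal R s) \<subseteq> v_op R ?C" by (rule v_mono)
    moreover have "v_op R (content_ideal R s) = R" using SNv s(1) unfolding Nv_def by blast
    ultimately show ?thesis using v_sub[OF CR] by blast
  next
    case False
    then obtain P where P: "prime_ideal R P" "?C \<subseteq> P" "polys_over P \<inter> S = {}"
      using prime_avoiding_exists[OF R S] Cm CR unfolding is_ideal_def by blast
    have "g \<in> polys_over P" unfolding polys_over_def
      using P(2) coeff_in_content[OF subringD(2)[OF R], of g] by blast
    then show ?thesis using ext_satD[OF g P(1,3)] by blast
  qed
  then show "g \<in> Nv R" unfolding Nv_def using gR \<open>g \<noteq> 0\<close> by blast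
qed

text \<open>If \<circlearrowleft>_S agrees with w_R, then N^{v_R} \<subseteq> S^{\<sharp>}: a polynomial g \<in> N^{v_R} over a
  prime P with P[X] \<inter> S = \<emptyset> would give 1 \<in> P^{w_R} = P^{\<circlearrowleft>_S}, i.e. some s \<in> S over P.\<close>
lemma Nv_sub_ext_sat:
  assumes D: "subring D" and S: "mult_subset D S"
    and w: "\<forall>E\<in>Fbar (circ D S D). circ D S E = w_op (circ D S D) E"
  shows "Nv (circ D S D) \<subseteq> ext_sat (circ D S D) S"
proof
  let ?R = "circ D S D"
  fix g assume g: "g \<in> Nv ?R"
  have "g \<notin> polys_over P" if P: "prime_ideal ?R P" "polys_over P \<inter> S = {}" for P
  proof
    assume gP: "g \<in> polys_over P"
    have Pm: "submod ?R P" using P(1) unfolding prime_ideal_def is_ideal_def by blast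
    have "coeff g (degree g) \<in> P" "coeff g (degree g) \<noteq> 0"
      using gP g unfolding polys_over_def Nv_def by auto
    then have "P \<in> Fbar ?R" unfolding Fbar_def using Pm by blast
    moreover have "1 \<in> w_op ?R P"
      by (rule w_op_intro[OF circ_subring[OF D S] g]) (use gP in \<open>simp add: polys_over_def\<close>)
    ultimately have "1 \<in> circ D S P" using w by blast
    then obtain s where "s \<in> S" "\<And>i. coeff s i \<in> P"
      unfolding circ_iff[OF D submod_restrict[OF Pm D_sub_circ[OF D S]]] by auto
    then show False using P(2) unfolding polys_over_def by blast
  qed
  then show "g \<in> ext_sat ?R S" unfolding ext_sat_def using g unfolding Nv_def by blast
qed

text \<open>If N^{v_R} \<subseteq> S^{\<sharp>}, no prime P with P[X] \<inter> S = \<emptyset> satisfies 1 \<in> P^t: a finite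
  F \<subseteq> P with F^v = R would be the coefficients of some g \<in> N^{v_R} over P.\<close>
lemma prime_avoiding_not_t_unit:
  assumes R: "subring R" and Nv: "Nv R \<subseteq> ext_sat R S"
    and P: "prime_ideal R P" "polys_over P \<inter> S = {}"
  shows "1 \<notin> t_op R P"
proof
  assume "1 \<in> t_op R P"
  then obtain G where G: "finite G" "gen R G \<subseteq> P" "gen R G \<noteq> {0}" "1 \<in> v_op R (gen R G)"
    by (rule t_opE)
  obtain g where g: "G \<subseteq> range (coeff g)" "range (coeff g) \<subseteq> insert 0 G"
    using poly_with_coeffs[OF G(1)] .
  have Pi: "is_ideal R P" using P(1) unfolding prime_ideal_def by blast
  have PR: "P \<subseteq> R" using Pi unfolding is_ideal_def by blast
  have "insert 0 G \<subseteq> P" using G(2) gen_base[OF subringD(2)[OF R], of G] ideal_zero[OF Pi] by blast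
  then have gP: "g \<in> polys_over P" using g(2) unfolding polys_over_def by blast
  then have gR: "g \<in> polys_over R" using polys_over_mono[OF PR] by blast
  have "gen R G \<subseteq> content_ideal R g" unfolding content_ideal_def by (rule gen_mono[OF g(1)])
  then have "1 \<in> v_op R (content_ideal R g)" using G(4) v_mono[of "gen R G"] by blast
  then have "v_op R (content_ideal R g) = R" by (rule v_eq_ring[OF R _ content_sub_ring[OF R gR]])
  moreover have "g \<noteq> 0"
  proof
    assume "g = 0"
    then have "gen R G \<subseteq> {0}" using g(1) by (intro gen_least) (auto simp: submod_def)
    then show False using G(3) gen_submod[OF R, of G] unfolding submod_def by blast
  qed
  ultimately have "g \<in> Nv R" unfolding Nv_def using gR by blast
  then show False using Nv ext_satD[OF _ P] gP by blast
qed

section \<open>The hard inclusion E^{w_R} \<subseteq> E^{\<circlearrowleft>_S}\<close>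

definition conductor :: "'k::field set \<Rightarrow> 'k set \<Rightarrow> 'k \<Rightarrow> 'k set" where
  "conductor R E x = {r \<in> R. r * x \<in> E}"

lemma conductor_ideal:
  assumes R: "subring R" and E: "submod R E"
  shows "is_ideal R (conductor R E x)"
  unfolding is_ideal_def submod_def conductor_def
  using subringD[OF R] E unfolding submod_def by (auto simp: distrib_right mult.assoc)

text \<open>Over a domain with quotient field K, (E :_R x) \<noteq> 0 for every nonzero E:
  writing x = a/b and taking 0 \<noteq> c \<in> E \<inter> D, the element bc lies in it.\<close>
lemma conductor_nonzero:
  assumes D: "domain_with_qf D" and DR: "D \<subseteq> R" and E: "submod R E" "E \<noteq> {0}"
  shows "conductor R E x \<noteq> {0}"
proof -
  have Dr: "subring D" and qf: "\<And>z. \<exists>a\<in>D. \<exists>b\<in>D. b \<noteq> 0 \<and> z = a / b"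
    using D unfolding domain_with_qf_def by auto
  have Ed: "\<forall>r\<in>R. \<forall>e\<in>E. r * e \<in> E" using E(1) unfolding submod_def by blast
  obtain e where e: "e \<in> E" "e \<noteq> 0" using E unfolding submod_def by blast
  obtain a b where ab: "a \<in> D" "b \<in> D" "b \<noteq> 0" "x = a / b" using qf[of x] by blast
  obtain c d where cd: "c \<in> D" "d \<in> D" "d \<noteq> 0" "e = c / d" using qf[of e] by blast
  have "c = d * e" "c \<noteq> 0" using cd e(2) by auto
  then have cE: "c \<in> E" "c \<noteq> 0" using Ed cd(2) DR e(1) by auto
  have "a * c \<in> E" using Ed ab(1) DR cE(1) by blast
  moreover have "(b * c) * x = a * c" using ab by simp
  ultimately have "(b * c) * x \<in> E" by (simp only:)
  moreover have "b * c \<in> R" "b * c \<noteq> 0" using subringD(4)[OF Dr ab(2) cd(1)] DR ab(3) cE(2) by auto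
  ultimately show ?thesis unfolding conductor_def by blast
qed

lemma w_conductor:
  assumes x: "x \<in> w_op R E" and M: "max_t_ideal R M"
  shows "\<not> conductor R E x \<subseteq> M"
proof
  assume JM: "conductor R E x \<subseteq> M"
  have "x \<in> loc R E M" using x M unfolding w_op_def by blast
  then obtain e s where es: "e \<in> E" "s \<in> R - M" "x = e / s" unfolding loc_def by blast
  have "s \<noteq> 0" using es(2) max_t_ideal_zero[OF M] by auto
  then have "s \<in> conductor R E x" using es unfolding conductor_def by simp
  then show False using JM es(2) by blast
qed

text \<open>For x \<in> E^{w_R} the conductor J
  is a nonzero ideal in no maximal t-ideal.  If J[X] missed S, J would lie in a prime P
  with P[X] \<inter> S = \<emptyset>, hence 1 \<notin> P^t, hence in a maximal t-ideal; so some s \<in> S has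
  coefficients in J, i.e. s witnesses x \<in> E^{\<circlearrowleft>_S}.\<close>
lemma w_sub_circ:
  assumes D: "domain_with_qf D" and S: "mult_subset D S" and DR: "D \<subseteq> R" and R: "subring R"
    and Nv: "Nv R \<subseteq> ext_sat R S" and E: "E \<in> Fbar R"
  shows "w_op R E \<subseteq> circ D S E"
proof
  fix x assume x: "x \<in> w_op R E"
  have Dr: "subring D" using D unfolding domain_with_qf_def by blast
  have Em: "submod R E" and E0: "E \<noteq> {0}" using E unfolding Fbar_def by auto
  let ?J = "conductor R E x"
  have J: "is_ideal R ?J" by (rule conductor_ideal[OF R Em])
  have "\<exists>s\<in>S. s \<in> polys_over ?J"
  proof (rule ccontr)
    assume "\<not> (\<exists>s\<in>S. s \<in> polys_over ?J)"
    then obtain P where P: "prime_ideal R P" "?J \<subseteq> P" "polys_over P \<inter> S = {}"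
      using prime_avoiding_exists[OF R mult_subset_mono[OF S DR] J] by blast
    have "is_ideal R P" using P(1) unfolding prime_ideal_def by blast
    moreover have "P \<noteq> {0}" using P(2) conductor_nonzero[OF D DR Em E0] ideal_zero[OF J] by blast
    moreover have "1 \<notin> t_op R P" by (rule prime_avoiding_not_t_unit[OF R Nv P(1,3)])
    ultimately obtain M where M: "max_t_ideal R M" "P \<subseteq> M" by (rule max_t_ideal_exists[OF R])
    then show False using w_conductor[OF x M(1)] P(2) by blast
  qed
  then obtain s where "s \<in> S" "\<And>i. coeff s i * x \<in> E"
    unfolding polys_over_def conductor_def by blast
  then show "x \<in> circ D S E"
    unfolding circ_iff[OF Dr submod_restrict[OF Em DR]] by (auto simp: mult.commute)
qed

theorem theorem2p1:
  fixes D :: "'k::field set" and S :: "'k poly set" and R :: "'k set"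
  assumes "domain_with_qf D"
    and "mult_subset D S"
    and "R = circ D S D"
  shows "t_linked D (circ D S) R
       \<and> S \<subseteq> Nv R
       \<and> circ D S R = R
       \<and> ((\<forall>E\<in>Fbar R. circ D S E = w_op R E) \<longleftrightarrow> ext_sat R S = Nv R)"
proof -
  note qf = assms(1) and S = assms(2)
  have D: "subring D" using qf unfolding domain_with_qf_def by blast
  have R: "subring R" and DR: "D \<subseteq> R" unfolding assms(3)
    using circ_subring[OF D S] D_sub_circ[OF D S] by blast+
  have SNv: "S \<subseteq> Nv R" unfolding assms(3) using mult_subset_in_Nv[OF D S] by blast
  have sat: "ext_sat R S \<subseteq> Nv R" by (rule ext_sat_sub_Nv[OF R mult_subset_mono[OF S DR] SNv])
  have "(\<forall>E\<in>Fbar R. circ D S E = w_op R E) \<longleftrightarrow> ext_sat R S = Nv R"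
  proof
    assume "\<forall>E\<in>Fbar R. circ D S E = w_op R E"
    then show "ext_sat R S = Nv R" using Nv_sub_ext_sat[OF D S] sat unfolding assms(3) by blast
  next
    assume "ext_sat R S = Nv R"
    then have "w_op R E \<subseteq> circ D S E" if "E \<in> Fbar R" for E
      using w_sub_circ[OF qf S DR R _ that] by blast
    moreover have "circ D S E \<subseteq> w_op R E" if "E \<in> Fbar R" for E
      using circ_sub_w[OF D S] that unfolding assms(3) Fbar_def by blast
    ultimately show "\<forall>E\<in>Fbar R. circ D S E = w_op R E" by blast
  qed
  then show ?thesis
    using circ_t_linked[OF D S] SNv circ_fixes_ring[OF D S] unfolding assms(3) by blast
qed

end
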